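(* Let $(\mathcal G,L,I)$ be a relational symplectic groupoid with $L_2$ as defined. Then $$\overline{I_{rel}}\circ L_2=\overline{L_2}\circ\overline{I_{rel}}\qquad\text{and}\qquad L_2^*=L_2.$$ Here $L_2^*$ is the transpose relation, and $\overline{L_2}$ is the same subset as $L_2$ regarded as a relation $\bar{\mathcal G}\nrightarrow\bar{\mathcal G}$. In set terms: $(x,y)\in L_2\iff(I(x),I(y))\in L_2$, and $(x,y)\in L_2\iff(y,x)\in L_2$.
   Context: Relations: for sets $A,B$, a relation $R:A\nrightarrow B$ is a subset $R\subset A\times B$. The composition of $R:A\nrightarrow B$ and $R':B\nrightarrow C$ is $R'\circ R=\{(a,c): \exists b,\ (a,b)\in R,\ (b,c)\in R'\}$. The transpose is $R^*=\{(b,a):(a,b)\in R\}$. Products $R_1\times R_2:A_1\times A_2\nrightarrow B_1\times B_2$ are taken componentwise. $*$ denotes a one-point set, and a relation $*\nrightarrow B$ is identified with a subset of $B$. For a (possibly infinite-dimensional, weak) symplectic manifold $\mathcal M$, $\bar{\mathcal M}$ denotes $\mathcal M$ with the negated symplectic form. An immersed canonical relation $\mathcal M\nrightarrow\mathcal N$ is an immersed Lagrangian submanifold of $\bar{\mathcal M}\times\mathcal N$. A relational symplectic groupoid is a triple $(\mathcal G,L,I)$ consisting of: - a weak symplectic manifold $\mathcal G$ (the induced map $T\mathcal G\to T^*\mathcal G$ is injective); - an immersed Lagrangian submanifold $L\subset\mathcal G^3$; - an antisymplectomorphism $I:\mathcal G\to\mathcal G$. Notation: - $L_{rel}:\mathcal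 G\times\mathcal G\nrightarrow\bar{\mathcal G}$ is the subset $\{((x,y),z):(x,y,z)\in L\}$. - $I_{rel}:\bar{\mathcal G}\nrightarrow\mathcal G$ is the graph $\{(x,I(x))\}$. - $\overline{L_{rel}}:\bar{\mathcal G}\times\bar{\mathcal G}\nrightarrow\mathcal G$ and $\overline{I_{rel}}:\mathcal G\nrightarrow\bar{\mathcal G}$ are the same subsets regarded between the sign-reversed manifolds. - $T_{rel}$ and $\overline{T_{rel}}$ denote the graph of the transposition $(x,y)\mapsto(y,x)$ on $\mathcal G\times\mathcal G$, respectively on $\bar{\mathcal G}\times\bar{\mathcal G}$. - $Id$ denotes the graph of the identity. - $L_I:*\nrightarrow\mathcal G\times\mathcal G$ is the subset $\{(x,I(x)):x\in\mathcal G\}$. - $L_3:=I_{rel}\circ L_{rel}:\mathcal G\times\mathcal G\nrightarrow\mathcal G$, i.e. $L_3=\{((x,y),I(z)):(x,y,z)\in L\}$. Axioms: - (A.1) $L$ is cyclically symmetric: $(x,y,z)\in L\Rightarrow(y,z,x)\in L$. - (A.2) $I^2=\mathrm{id}$. - (A.3) $I_{rel}\circ L_{rel}=\overline{L_{rel}}\circ\overline{T_{rel}}\circ(\overline{I_{rel}}\times\overline{I_{rel}})$. - (A.4) $L_3\circ(L_3\times Id)=L_3\circ(Id\times L_3)$, and this is an immersed Lagrangian submanifold (as a relation $\mathcal G^3\nrightarrow\mathcal G$). - (A.5) $L_1:=L_3\circ L_I$ is an immersed Lagrangian submanifold of $\mathcal G$. - (A.6) $L_3\circ(L_1\times L_1)=L_1$.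 - (A.7) $L_2:=L_3\circ(L_1\times Id)$ is an immersed Lagrangian submanifold of $\bar{\mathcal G}\times\mathcal G$. *)

theory Defs
  imports Main
begin

(* Relations R : A -/-> B are sets of pairs (A \<times> B) set.
   Composition in the paper's order: rcomp R' R = R' \<circ> R (first R, then R'). *)
definition rcomp :: "('b \<times> 'c) set \<Rightarrow> ('a \<times> 'b) set \<Rightarrow> ('a \<times> 'c) set" where
  "rcomp R' R = R O R'"

definition rprod :: "('a1 \<times> 'b1) set \<Rightarrow> ('a2 \<times> 'b2) set \<Rightarrow> (('a1 \<times> 'a2) \<times> ('b1 \<times> 'b2)) set" where
  "rprod R1 R2 = {((a1, a2), (b1, b2)). (a1, b1) \<in> R1 \<and> (a2, b2) \<in> R2}"

definition graph :: "('a \<Rightarrow> 'b) \<Rightarrow> ('a \<times> 'b) set" where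
  "graph f = {(x, f x) | x. True}"

definition Lrel :: "('g \<times> 'g \<times> 'g) set \<Rightarrow> (('g \<times> 'g) \<times> 'g) set" where
  "Lrel L = {((x, y), z). (x, y, z) \<in> L}"

definition Trel :: "(('g \<times> 'g) \<times> ('g \<times> 'g)) set" where
  "Trel = {((x, y), (y, x)) | x y. True}"

definition L3 :: "('g \<times> 'g \<times> 'g) set \<Rightarrow> ('g \<Rightarrow> 'g) \<Rightarrow> (('g \<times> 'g) \<times> 'g) set" where
  "L3 L I = rcomp (graph I) (Lrel L)"

(* L_I : * -/-> G \<times> G, identified with a subset of G \<times> G *)
definition LI :: "('g \<Rightarrow> 'g) \<Rightarrow> ('g \<times> 'g) set" where
  "LI I = {(x, I x) | x. True}"

(* L_1 = L_3 \<circ> L_I, a subset of G (composition of a relation with a point-relation = image) *)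
definition L1 :: "('g \<times> 'g \<times> 'g) set \<Rightarrow> ('g \<Rightarrow> 'g) \<Rightarrow> 'g set" where
  "L1 L I = L3 L I `` LI I"

(* L_1 \<times> Id : * \<times> G -/-> G \<times> G, with * \<times> G identified with G *)
definition L1xId :: "('g \<times> 'g \<times> 'g) set \<Rightarrow> ('g \<Rightarrow> 'g) \<Rightarrow> ('g \<times> ('g \<times> 'g)) set" where
  "L1xId L I = {(x, (l, x)) | x l. l \<in> L1 L I}"

definition L2 :: "('g \<times> 'g \<times> 'g) set \<Rightarrow> ('g \<Rightarrow> 'g) \<Rightarrow> ('g \<times> 'g) set" where
  "L2 L I = rcomp (L3 L I) (L1xId L I)"

(* The differential-geometric requirements (weak symplectic manifold, Lagrangian
   immersions, antisymplectomorphism) are not modelled. *)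
definition rel_sympl_groupoid_axioms :: "('g \<times> 'g \<times> 'g) set \<Rightarrow> ('g \<Rightarrow> 'g) \<Rightarrow> bool" where
  "rel_sympl_groupoid_axioms L I \<longleftrightarrow>
     \<comment> \<open>A.1\<close> (\<forall>x y z. (x, y, z) \<in> L \<longrightarrow> (y, z, x) \<in> L) \<and>
     \<comment> \<open>A.2\<close> (\<forall>x. I (I x) = x) \<and>
     \<comment> \<open>A.3\<close> rcomp (graph I) (Lrel L) = rcomp (Lrel L) (rcomp Trel (rprod (graph I) (graph I))) \<and>
     \<comment> \<open>A.4 (set-theoretic part), with G^3 identified via reassociation\<close>
       {((x, y, z), w). (((x, y), z), w) \<in> rcomp (L3 L I) (rprod (L3 L I) Id)}
       = {((x, y, z), w). ((x, (y, z)), w) \<in> rcomp (L3 L I) (rprod Id (L3 L I))} \<and>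
     \<comment> \<open>A.6\<close> L3 L I `` (L1 L I \<times> L1 L I) = L1 L I"

end

theory Submission
  imports Defs
begin

(* Write "c is a product of a and b" for ((a,b),c) \<in> L_3, i.e. (a,b,I c) \<in> L.
   The axioms then say: I is an involution (A.2), L is cyclic (A.1), products are
   reversed by I (A.3), and the product relation is associative (A.4).  L_1 is the set
   of products a\<cdot>I(a) ("units") and (x,y) \<in> L_2 means that y is a product u\<cdot>x with
   u \<in> L_1.
   - Symmetry of L_2: from y = u\<cdot>x one gets x = I(u)\<cdot>y by rotating the triple with
     A.1 and A.3, and I(u) is again a unit.
   - Invariance of L_2 under I\<times>I: from y = (a\<cdot>I a)\<cdot>x associativity and rotation give
     y = x\<cdot>w with w = I(d)\<cdot>d a unit, and applying I yields I y = I(w)\<cdot>I x. *)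

lemma L3_iff: "((a, b), c) \<in> L3 L I \<longleftrightarrow> (\<exists>z. (a, b, z) \<in> L \<and> c = I z)"
  by (auto simp: L3_def rcomp_def Lrel_def graph_def)

lemma L1_iff: "c \<in> L1 L I \<longleftrightarrow> (\<exists>a. ((a, I a), c) \<in> L3 L I)"
  by (auto simp: L1_def LI_def)

lemma L2_iff: "(x, y) \<in> L2 L I \<longleftrightarrow> (\<exists>u \<in> L1 L I. ((u, x), y) \<in> L3 L I)"
  by (auto simp: L2_def rcomp_def L1xId_def)

lemma graph_involution_commute:
  assumes invol: "\<And>x. I (I x) = x"
    and invariant: "\<And>x y. (x, y) \<in> R \<Longrightarrow> (I x, I y) \<in> R"
  shows "rcomp (graph I) R = rcomp R (graph I)"
proof (intro set_eqI iffI)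
  fix p assume "p \<in> rcomp (graph I) R"
  then obtain x y where "p = (x, I y)" "(x, y) \<in> R"
    by (auto simp: rcomp_def graph_def)
  moreover have "(I x, I y) \<in> R" using \<open>(x, y) \<in> R\<close> invariant by blast
  ultimately show "p \<in> rcomp R (graph I)" by (auto simp: rcomp_def graph_def)
next
  fix p assume "p \<in> rcomp R (graph I)"
  then obtain x y where "p = (I x, y)" "(x, y) \<in> R"
    using invol by (auto simp: rcomp_def graph_def) metis
  moreover have "(I x, I y) \<in> R" using \<open>(x, y) \<in> R\<close> invariant by blast
  ultimately show "p \<in> rcomp (graph I) R" using invol by (auto simp: rcomp_def graph_def)
qed

locale relational_symplectic_groupoid =
  fixes L :: "('g \<times> 'g \<times> 'g) set" and I :: "'g \<Rightarrow> 'g"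
  assumes axioms: "rel_sympl_groupoid_axioms L I"
begin

abbreviation product :: "'g \<Rightarrow> 'g \<Rightarrow> 'g \<Rightarrow> bool" where
  "product a b c \<equiv> ((a, b), c) \<in> L3 L I"

lemma involution [simp]: "I (I x) = x"
  using axioms by (simp add: rel_sympl_groupoid_axioms_def)

lemma product_iff: "product a b c \<longleftrightarrow> (a, b, I c) \<in> L"
  by (auto simp: L3_iff)

lemma product_rotate: "product a b c \<Longrightarrow> product b (I c) (I a)"
  using axioms by (simp add: product_iff rel_sympl_groupoid_axioms_def)

lemma L_inverse: "(x, y, z) \<in> L \<Longrightarrow> (I y, I x, I z) \<in> L"
proof -
  assume "(x, y, z) \<in> L"
  then have "((x, y), I z) \<in> rcomp (graph I) (Lrel L)"
    by (auto simp: rcomp_def graph_def Lrel_def)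
  also have "rcomp (graph I) (Lrel L) = rcomp (Lrel L) (rcomp Trel (rprod (graph I) (graph I)))"
    using axioms by (simp add: rel_sympl_groupoid_axioms_def)
  finally show ?thesis
    by (auto simp: rcomp_def graph_def Lrel_def Trel_def rprod_def)
qed

lemma product_inverse: "product a b c \<Longrightarrow> product (I b) (I a) (I c)"
  using L_inverse[of a b "I c"] by (simp add: product_iff)

lemma product_assoc:
  "(\<exists>c. product x y c \<and> product c z w) \<longleftrightarrow> (\<exists>c. product y z c \<and> product x c w)"
proof -
  have "(\<exists>c. product x y c \<and> product c z w) \<longleftrightarrow>
      ((x, y, z), w) \<in> {((x, y, z), w). (((x, y), z), w) \<in> rcomp (L3 L I) (rprod (L3 L I) Id)}"
    by (auto simp: rcomp_def rprod_def)
  also have "\<dots> \<longleftrightarrow>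
      ((x, y, z), w) \<in> {((x, y, z), w). ((x, (y, z)), w) \<in> rcomp (L3 L I) (rprod Id (L3 L I))}"
    using axioms by (simp add: rel_sympl_groupoid_axioms_def)
  also have "\<dots> \<longleftrightarrow> (\<exists>c. product y z c \<and> product x c w)"
    by (auto simp: rcomp_def rprod_def)
  finally show ?thesis .
qed

text \<open>The units L_1 are closed under I, since I(a\<cdot>I a) = a\<cdot>I a as a product.\<close>

lemma unit_inverse: "u \<in> L1 L I \<Longrightarrow> I u \<in> L1 L I"
  using product_inverse by (fastforce simp: L1_iff)

lemma L2_sym: "(x, y) \<in> L2 L I \<Longrightarrow> (y, x) \<in> L2 L I"
proof -
  assume "(x, y) \<in> L2 L I"
  then obtain u where unit: "u \<in> L1 L I" and y: "product u x y" by (auto simp: L2_iff)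
  have "product (I u) y x"
    using product_rotate[OF product_inverse[OF y]] by simp
  with unit_inverse[OF unit] show ?thesis by (auto simp: L2_iff)
qed

lemma L2_inverse: "(x, y) \<in> L2 L I \<Longrightarrow> (I x, I y) \<in> L2 L I"
proof -
  assume "(x, y) \<in> L2 L I"
  then obtain a u where u: "product a (I a) u" and y: "product u x y"
    by (auto simp: L2_iff L1_iff)
  text \<open>Reassociate (a\<cdot>I a)\<cdot>x = a\<cdot>d with d = I(a)\<cdot>x, so that x\<cdot>I(d) = a.\<close>
  obtain d where d: "product (I a) x d" and y': "product a d y"
    using product_assoc[of a "I a" x y] u y by blast
  have a: "product x (I d) a" using product_rotate[OF d] by simp
  text \<open>Reassociate (x\<cdot>I d)\<cdot>d = x\<cdot>w with the unit w = I(d)\<cdot>d.\<close>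
  obtain w where w: "product (I d) d w" and y'': "product x w y"
    using product_assoc[of x "I d" d y] a y' by blast
  have "w \<in> L1 L I" using w by (auto simp: L1_iff intro: exI[of _ "I d"])
  then have "I w \<in> L1 L I" by (rule unit_inverse)
  moreover have "product (I w) (I x) (I y)" using product_inverse[OF y''] .
  ultimately show ?thesis by (auto simp: L2_iff)
qed

end

theorem mainTheorem5:
  fixes L :: "('g \<times> 'g \<times> 'g) set" and I :: "'g \<Rightarrow> 'g"
  assumes "rel_sympl_groupoid_axioms L I"
  shows "rcomp (graph I) (L2 L I) = rcomp (L2 L I) (graph I) \<and> (L2 L I)\<inverse> = L2 L I"
proof -
  interpret relational_symplectic_groupoid L I using assms by unfold_locales
  have "rcomp (graph I) (L2 L I) = rcomp (L2 L I) (graph I)"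
    by (rule graph_involution_commute) (auto intro: L2_inverse)
  moreover have "(L2 L I)\<inverse> = L2 L I" using L2_sym by auto
  ultimately show ?thesis ..
qed

end
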